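(* Let $P\subset\mathbb R^d$ be a $d$-polytope in general position, and let $P=P_1\cup\dots\cup P_k$ be a triangulation of $P$ into $d$-simplices whose vertices are all vertices of $P$ (the $P_i$ having pairwise intersections contained in their boundaries). Then for every $x\in\mathbb R^d$, $\mathbf 1_{\Omega(P)}(x)=\sum_{i=1}^k\mathbf 1_{\Omega(P_i)}(x)$. In particular $|\mathcal L(\Omega(P))|=\sum_{i=1}^k|\mathcal L(\Omega(P_i))|$.
   Context: For $k\ge1$, $\pi:\mathbb R^k\to\mathbb R^{k-1}$ forgets the last coordinate and $\pi^{(j)}$ forgets the last $j$ coordinates. For a compact $S\subset\mathbb R^k$ and $y\in\pi(S)$, $n(y,S)$ is the point of $S\cap\pi^{-1}(y)$ with smallest last coordinate, $NB(S)=\{n(y,S):y\in\pi(S)\}$, and $\Omega(S)=S\setminus NB(S)$; $\mathcal L(S)=S\cap\mathbb Z^k$; $\mathbf 1_A$ is the indicator function. A $d$-polytope $P$ with vertex set $V$ is in general position if for every $0\le k\le d-1$ and every $(k+1)$-subset $U\subset V$, $\pi^{(d-k)}(\mathrm{conv}(U))$ is a $k$-simplex. *)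

theory Defs
  imports Complex_Main "HOL-Library.Indicator_Function"
begin

text \<open>Points of R^k are represented as functions nat => real vanishing at all
  coordinates i >= k (coordinates 0..k-1; the last coordinate is k-1).\<close>

definition Rn :: "nat \<Rightarrow> (nat \<Rightarrow> real) set" where
  "Rn k = {x. \<forall>i\<ge>k. x i = 0}"

definition projn :: "nat \<Rightarrow> nat \<Rightarrow> (nat \<Rightarrow> real) \<Rightarrow> (nat \<Rightarrow> real)" where
  "projn k j x = (\<lambda>i. if i < k - j then x i else 0)"

definition conv :: "(nat \<Rightarrow> real) set \<Rightarrow> (nat \<Rightarrow> real) set" where
  "conv U = {y. \<exists>c. (\<forall>v\<in>U. 0 \<le> c v) \<and> (\<Sum>v\<in>U. c v) = 1 \<and>
                     y = (\<lambda>i. \<Sum>v\<in>U. c v * v i)}"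

definition aff_indep :: "(nat \<Rightarrow> real) set \<Rightarrow> bool" where
  "aff_indep W \<longleftrightarrow> finite W \<and>
     (\<forall>c. (\<Sum>w\<in>W. c w) = 0 \<and> (\<lambda>i. \<Sum>w\<in>W. c w * w i) = (\<lambda>i. 0) \<longrightarrow> (\<forall>w\<in>W. c w = 0))"

definition is_simplex :: "nat \<Rightarrow> (nat \<Rightarrow> real) set \<Rightarrow> bool" where
  "is_simplex k S \<longleftrightarrow> (\<exists>W. W \<subseteq> Rn k \<and> aff_indep W \<and> card W = k + 1 \<and> S = conv W)"

definition vertices :: "(nat \<Rightarrow> real) set \<Rightarrow> (nat \<Rightarrow> real) set" where
  "vertices P = {v\<in>P. \<not> (\<exists>a\<in>P. \<exists>b\<in>P. \<exists>t::real. a \<noteq> b \<and> 0 < t \<and> t < 1 \<and>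
                      v = (\<lambda>i. (1 - t) * a i + t * b i))}"

definition is_polytope :: "nat \<Rightarrow> (nat \<Rightarrow> real) set \<Rightarrow> bool" where
  "is_polytope d P \<longleftrightarrow> (\<exists>V. finite V \<and> V \<subseteq> Rn d \<and> P = conv V) \<and>
     (\<exists>W. W \<subseteq> P \<and> aff_indep W \<and> card W = d + 1)"

definition general_position :: "nat \<Rightarrow> (nat \<Rightarrow> real) set \<Rightarrow> bool" where
  "general_position d P \<longleftrightarrow>
     (\<forall>k U. k \<le> d - 1 \<longrightarrow> U \<subseteq> vertices P \<longrightarrow> card U = k + 1 \<longrightarrow>
        is_simplex k (projn d (d - k) ` conv U))"

definition interior_d :: "nat \<Rightarrow> (nat \<Rightarrow> real) set \<Rightarrow> (nat \<Rightarrow> real) set" where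
  "interior_d d S = {x\<in>S. \<exists>e>0. \<forall>y\<in>Rn d. (\<Sum>i<d. (y i - x i)^2) < e^2 \<longrightarrow> y \<in> S}"

definition closure_d :: "nat \<Rightarrow> (nat \<Rightarrow> real) set \<Rightarrow> (nat \<Rightarrow> real) set" where
  "closure_d d S = {x\<in>Rn d. \<forall>e>0. \<exists>y\<in>S. (\<Sum>i<d. (y i - x i)^2) < e^2}"

definition boundary_d :: "nat \<Rightarrow> (nat \<Rightarrow> real) set \<Rightarrow> (nat \<Rightarrow> real) set" where
  "boundary_d d S = closure_d d S - interior_d d S"

text \<open>NB(S) for S in R^k: x is n(pi x, S), i.e. the point of the fibre of x
  with smallest last coordinate (coordinate k-1).\<close>
definition NB :: "nat \<Rightarrow> (nat \<Rightarrow> real) set \<Rightarrow> (nat \<Rightarrow> real) set" where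
  "NB k S = {x\<in>S. \<forall>x'\<in>S. projn k 1 x' = projn k 1 x \<longrightarrow> x (k - 1) \<le> x' (k - 1)}"

definition Omega :: "nat \<Rightarrow> (nat \<Rightarrow> real) set \<Rightarrow> (nat \<Rightarrow> real) set" where
  "Omega k S = S - NB k S"

definition lattice_pts :: "nat \<Rightarrow> (nat \<Rightarrow> real) set \<Rightarrow> (nat \<Rightarrow> real) set" where
  "lattice_pts k S = {x\<in>S. \<forall>i<k. x i \<in> \<int>}"

end

theory Submission
  imports Defs "HOL-Library.Function_Algebras"
begin

text \<open>
  A point x lies in Omega(S) iff x \<in> S and, for some t > 0, so does the point obtained from x by
  lowering its last coordinate by t.
  If x \<in> Omega(P), the vertical segment below x lies in the convex set P. A simplex not containing x
  misses an initial piece of this segment, so one of the finitely many P_i contains x together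
  with an initial piece, i.e. x \<in> Omega(P_i); the reverse inclusion is monotonicity of Omega.
  If x were in Omega(P_i) \<inter> Omega(P_j) for i \<noteq> j, a short vertical segment from x down would lie in
  P_i \<inter> P_j. By general position the vertical projection of every facet of P_i is a
  (d-1)-simplex, hence injective, so no facet contains that segment; its midpoint therefore has
  positive barycentric coordinates and is an interior point of P_i, contradicting
  P_i \<inter> P_j \<subseteq> boundary P_i. So Omega(P) is the disjoint union of the Omega(P_i).
\<close>

section \<open>Affine independence and dimension\<close>

definition scale_fun :: "real \<Rightarrow> (nat \<Rightarrow> real) \<Rightarrow> (nat \<Rightarrow> real)" where
  "scale_fun c f = (\<lambda>i. c * f i)"

interpretation fun_vs: vector_space scale_fun
  by unfold_locales (auto simp: scale_fun_def algebra_simps fun_eq_iff)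

lemma sum_fun_apply: "sum g A (i::nat) = (\<Sum>a\<in>A. (g a :: nat \<Rightarrow> real) i)"
  by (induction A rule: infinite_finite_induct) auto

definition homogenize :: "(nat \<Rightarrow> real) \<Rightarrow> (nat \<Rightarrow> real)" where
  "homogenize v = (\<lambda>i. if i = 0 then 1 else v (i - 1))"

lemma inj_homogenize: "inj homogenize"
proof
  fix a b assume "homogenize a = homogenize b"
  then have "\<And>i. homogenize a (Suc i) = homogenize b (Suc i)" by simp
  then show "a = b" by (auto simp: homogenize_def fun_eq_iff)
qed

lemma independent_homogenize:
  assumes "aff_indep W"
  shows "fun_vs.independent (homogenize ` W)"
proof (rule fun_vs.independent_if_scalars_zero)
  show "finite (homogenize ` W)" using assms aff_indep_def by blast
  fix f x
  assume "(\<Sum>x\<in>homogenize ` W. scale_fun (f x) x) = 0" and x: "x \<in> homogenize ` W"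
  then have zero: "(\<Sum>w\<in>W. scale_fun (f (homogenize w)) (homogenize w)) = 0"
    by (simp add: sum.reindex inj_on_subset[OF inj_homogenize])
  have "(\<Sum>w\<in>W. f (homogenize w)) = 0"
    using fun_cong[OF zero, of 0] by (simp add: sum_fun_apply scale_fun_def homogenize_def)
  moreover have "(\<lambda>i. \<Sum>w\<in>W. f (homogenize w) * w i) = (\<lambda>i. 0)"
    using fun_cong[OF zero, of "Suc i" for i] by (simp add: sum_fun_apply scale_fun_def homogenize_def)
  ultimately have "\<forall>w\<in>W. f (homogenize w) = 0" using assms unfolding aff_indep_def by blast
  then show "f x = 0" using x by auto
qed

definition aff_hull :: "(nat \<Rightarrow> real) set \<Rightarrow> (nat \<Rightarrow> real) set" where
  "aff_hull A = {y. \<exists>c. sum c A = 1 \<and> y = (\<lambda>i. \<Sum>v\<in>A. c v * v i)}"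

lemma card_le_if_aff_indep_subset_aff_hull:
  assumes "aff_indep W" "finite A" "W \<subseteq> aff_hull A"
  shows "card W \<le> card A"
proof -
  have "homogenize ` W \<subseteq> fun_vs.span (homogenize ` A)"
  proof
    fix z assume "z \<in> homogenize ` W"
    then obtain y c where "z = homogenize y" "sum c A = 1" "y = (\<lambda>i. \<Sum>v\<in>A. c v * v i)"
      using assms(3) unfolding aff_hull_def by blast
    then have "z = (\<Sum>v\<in>A. scale_fun (c v) (homogenize v))"
      by (auto simp: fun_eq_iff sum_fun_apply scale_fun_def homogenize_def)
    also have "\<dots> \<in> fun_vs.span (homogenize ` A)"
      by (intro fun_vs.span_sum fun_vs.span_scale fun_vs.span_base) auto
    finally show "z \<in> fun_vs.span (homogenize ` A)" .
  qed
  then have "card (homogenize ` W) \<le> card (homogenize ` A)"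
    using fun_vs.independent_span_bound[OF _ independent_homogenize[OF assms(1)]] assms(2) by auto
  then show ?thesis by (simp add: card_image inj_on_subset[OF inj_homogenize])
qed

lemma aff_hull_image:
  assumes "finite A" "sum c A = 1"
  shows "(\<lambda>i. \<Sum>a\<in>A. c a * f a i) \<in> aff_hull (f ` A)"
proof -
  let ?c' = "\<lambda>v. \<Sum>a\<in>{a\<in>A. f a = v}. c a"
  have "sum ?c' (f ` A) = 1"
    using sum.image_gen[OF assms(1), of c f] assms(2) by simp
  moreover have "(\<Sum>a\<in>A. c a * f a i) = (\<Sum>v\<in>f ` A. ?c' v * v i)" for i
    by (subst sum.image_gen[OF assms(1), of _ f]) (auto simp: sum_distrib_right intro!: sum.cong)
  ultimately show ?thesis unfolding aff_hull_def by blast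
qed

definition unit_vec :: "nat \<Rightarrow> nat \<Rightarrow> real" where
  "unit_vec k = (\<lambda>i. if i = k then 1 else 0)"

definition affine_frame :: "nat \<Rightarrow> nat \<Rightarrow> nat \<Rightarrow> real" where
  "affine_frame d k = (if k < d then unit_vec k else (\<lambda>_. 0))"

lemma Rn_subset_aff_hull_affine_frame: "Rn d \<subseteq> aff_hull (affine_frame d ` {..d})"
proof
  fix y assume y: "y \<in> Rn d"
  let ?c = "\<lambda>k. if k < d then y k else 1 - (\<Sum>j<d. y j)"
  have "sum ?c {..d} = 1" by (simp add: lessThan_Suc_atMost[symmetric])
  moreover have "y = (\<lambda>i. \<Sum>k\<le>d. ?c k * affine_frame d k i)"
    using y by (auto simp: fun_eq_iff affine_frame_def unit_vec_def Rn_def lessThan_Suc_atMost[symmetric]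
        if_distrib[where f="\<lambda>x. _ * x"] sum.delta cong: if_cong)
  ultimately show "y \<in> aff_hull (affine_frame d ` {..d})"
    using aff_hull_image[of "{..d}" ?c "affine_frame d"] by simp
qed

lemma card_aff_indep_le_Rn:
  assumes "aff_indep W" "W \<subseteq> Rn d"
  shows "card W \<le> d + 1"
proof -
  have "card W \<le> card (affine_frame d ` {..d})"
    using assms Rn_subset_aff_hull_affine_frame by (intro card_le_if_aff_indep_subset_aff_hull) auto
  also have "\<dots> \<le> d + 1" using card_image_le[of "{..d}" "affine_frame d"] by simp
  finally show ?thesis .
qed

lemma aff_coeffs_unique:
  assumes "aff_indep W" "sum c W = 1" "sum c' W = 1"
    and "(\<lambda>i. \<Sum>v\<in>W. c v * v i) = (\<lambda>i. \<Sum>v\<in>W. c' v * v i)" "w \<in> W"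
  shows "c w = c' w"
proof -
  have "(\<Sum>v\<in>W. c v - c' v) = 0" using assms by (simp add: sum_subtractf)
  moreover have "(\<lambda>i. \<Sum>v\<in>W. (c v - c' v) * v i) = (\<lambda>i. 0)"
    using assms(4) by (simp add: fun_eq_iff left_diff_distrib sum_subtractf)
  ultimately show ?thesis using assms(1,5) unfolding aff_indep_def by fastforce
qed

lemma mem_conv: "finite W \<Longrightarrow> w \<in> W \<Longrightarrow> w \<in> conv W"
  unfolding conv_def
  by (rule CollectI, rule exI[where x="\<lambda>v. if v = w then 1 else 0"])
     (auto simp: sum.delta' if_distrib[where f="\<lambda>x. x * _"] cong: if_cong)

lemma conv_subset_aff_hull: "conv W \<subseteq> aff_hull W"
  unfolding conv_def aff_hull_def by blast

lemma aff_indep_insert: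
  assumes W: "aff_indep W" and y: "y \<notin> aff_hull W"
  shows "aff_indep (insert y W)"
  unfolding aff_indep_def
proof (intro conjI allI impI)
  have fin: "finite W" using W aff_indep_def by blast
  then show "finite (insert y W)" by simp
  have yW: "y \<notin> W" using y mem_conv[OF fin] conv_subset_aff_hull by blast
  fix c assume c: "sum c (insert y W) = 0 \<and> (\<lambda>i. \<Sum>w\<in>insert y W. c w * w i) = (\<lambda>i. 0)"
  have sum_c: "c y + sum c W = 0" using c fin yW by simp
  have comb_c: "c y * y i + (\<Sum>w\<in>W. c w * w i) = 0" for i
    using c fin yW by (metis (no_types, lifting) sum.insert)
  have cy: "c y = 0"
  proof (rule ccontr)
    assume ne: "c y \<noteq> 0"
    have "sum (\<lambda>v. - c v / c y) W = 1"
      using sum_c ne by (simp add: sum_negf flip: sum_divide_distrib) (simp add: field_simps)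
    moreover have "y = (\<lambda>i. \<Sum>v\<in>W. - c v / c y * v i)"
    proof
      fix i
      have "(\<Sum>v\<in>W. - c v / c y * v i) = - (\<Sum>w\<in>W. c w * w i) / c y"
        by (simp add: sum_negf sum_divide_distrib)
      also have "\<dots> = y i" using comb_c[of i] ne by (simp add: field_simps)
      finally show "y i = (\<Sum>v\<in>W. - c v / c y * v i)" by simp
    qed
    ultimately have "y \<in> aff_hull W" unfolding aff_hull_def by blast
    then show False using y by simp
  qed
  have "\<forall>w\<in>W. c w = 0"
    using W sum_c comb_c cy unfolding aff_indep_def by auto
  then show "\<forall>w\<in>insert y W. c w = 0" using cy by simp
qed

lemma conv_subset_Rn: "W \<subseteq> Rn d \<Longrightarrow> conv W \<subseteq> Rn d"
  unfolding conv_def Rn_def by (auto intro!: sum.neutral)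

lemma sum_lincomb_mult:
  "(\<Sum>v\<in>V. (s * a v + t * b v) * v i) = s * (\<Sum>v\<in>V. a v * v i) + t * (\<Sum>v\<in>V. b v * (v i :: real))"
  by (simp add: distrib_right sum.distrib sum_distrib_left mult.assoc)

lemma conv_convex:
  assumes "p \<in> conv V" "q \<in> conv V" "0 \<le> t" "t \<le> 1"
  shows "(\<lambda>i. (1 - t) * p i + t * q i) \<in> conv V"
proof -
  obtain a where a: "\<forall>v\<in>V. 0 \<le> a v" "sum a V = 1" "p = (\<lambda>i. \<Sum>v\<in>V. a v * v i)"
    using assms(1) unfolding conv_def by blast
  obtain b where b: "\<forall>v\<in>V. 0 \<le> b v" "sum b V = 1" "q = (\<lambda>i. \<Sum>v\<in>V. b v * v i)"
    using assms(2) unfolding conv_def by blast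
  show ?thesis unfolding conv_def
  proof (intro CollectI exI conjI)
    show "\<forall>v\<in>V. 0 \<le> (1 - t) * a v + t * b v" using a b assms by auto
    show "(\<Sum>v\<in>V. (1 - t) * a v + t * b v) = 1"
      using a b by (simp add: sum.distrib flip: sum_distrib_left)
    show "(\<lambda>i. (1 - t) * p i + t * q i) = (\<lambda>i. \<Sum>v\<in>V. ((1 - t) * a v + t * b v) * v i)"
      unfolding a b by (simp only: sum_lincomb_mult)
  qed
qed

lemma convex_comb_nonpos_imp_zero:
  fixes a b t :: real
  assumes "0 \<le> a" "0 \<le> b" "0 < t" "t < 1" "(1 - t) * a + t * b \<le> 0"
  shows "a = 0" "b = 0"
proof -
  have "0 \<le> (1 - t) * a" "0 \<le> t * b" using assms by simp_all
  then have "(1 - t) * a = 0" "t * b = 0" using assms(5) by linarith+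
  then show "a = 0" "b = 0" using assms(3,4) by simp_all
qed

section \<open>Barycentric coordinates in a full-dimensional simplex\<close>

locale Rn_simplex =
  fixes d :: nat and W :: "(nat \<Rightarrow> real) set"
  assumes W_Rn: "W \<subseteq> Rn d" and W_aff_indep: "aff_indep W" and card_W: "card W = d + 1"
begin

lemma finite_W: "finite W"
  using W_aff_indep aff_indep_def by blast

lemma conv_subset_Rn_W: "conv W \<subseteq> Rn d"
  using conv_subset_Rn[OF W_Rn] .

lemma Rn_subset_aff_hull_W: "Rn d \<subseteq> aff_hull W"
proof
  fix y assume y: "y \<in> Rn d"
  show "y \<in> aff_hull W"
  proof (rule ccontr)
    assume y_out: "y \<notin> aff_hull W"
    then have "y \<notin> W" using mem_conv[OF finite_W] conv_subset_aff_hull by blast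
    then have "card (insert y W) = d + 2" using finite_W card_W by simp
    moreover have "card (insert y W) \<le> d + 1"
      using card_aff_indep_le_Rn[OF aff_indep_insert[OF W_aff_indep y_out]] W_Rn y by auto
    ultimately show False by simp
  qed
qed

definition bary :: "(nat \<Rightarrow> real) \<Rightarrow> (nat \<Rightarrow> real) \<Rightarrow> real" where
  "bary y = (SOME c. sum c W = 1 \<and> y = (\<lambda>i. \<Sum>v\<in>W. c v * v i))"

lemma bary:
  assumes "y \<in> Rn d"
  shows sum_bary: "sum (bary y) W = 1" and bary_repr: "y = (\<lambda>i. \<Sum>v\<in>W. bary y v * v i)"
proof -
  have "\<exists>c. sum c W = 1 \<and> y = (\<lambda>i. \<Sum>v\<in>W. c v * v i)"
    using Rn_subset_aff_hull_W assms unfolding aff_hull_def by blast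
  then have "sum (bary y) W = 1 \<and> y = (\<lambda>i. \<Sum>v\<in>W. bary y v * v i)"
    unfolding bary_def by (rule someI_ex)
  then show "sum (bary y) W = 1" "y = (\<lambda>i. \<Sum>v\<in>W. bary y v * v i)" by auto
qed

lemma bary_unique:
  assumes "sum c W = 1" "y = (\<lambda>i. \<Sum>v\<in>W. c v * v i)" "w \<in> W"
  shows "bary y w = c w"
proof -
  have y: "y \<in> Rn d" using assms(2) W_Rn unfolding Rn_def by (auto intro!: sum.neutral)
  show ?thesis
    using aff_coeffs_unique[OF W_aff_indep sum_bary[OF y] assms(1) _ assms(3)] bary_repr[OF y] assms(2)
    by simp
qed

lemma mem_conv_iff: "y \<in> conv W \<longleftrightarrow> y \<in> Rn d \<and> (\<forall>w\<in>W. 0 \<le> bary y w)"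
proof
  assume y: "y \<in> conv W"
  then obtain c where "\<forall>v\<in>W. 0 \<le> c v" "sum c W = 1" "y = (\<lambda>i. \<Sum>v\<in>W. c v * v i)"
    unfolding conv_def by blast
  then show "y \<in> Rn d \<and> (\<forall>w\<in>W. 0 \<le> bary y w)"
    using y conv_subset_Rn_W bary_unique by auto
next
  assume "y \<in> Rn d \<and> (\<forall>w\<in>W. 0 \<le> bary y w)"
  then show "y \<in> conv W" unfolding conv_def using bary by blast
qed

lemma bary_convex_comb:
  assumes "p \<in> Rn d" "q \<in> Rn d" "w \<in> W"
  shows "bary (\<lambda>i. (1 - t) * p i + t * q i) w = (1 - t) * bary p w + t * bary q w"
proof (rule bary_unique[OF _ _ assms(3)])
  show "(\<Sum>v\<in>W. (1 - t) * bary p v + t * bary q v) = 1"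
    using sum_bary[OF assms(1)] sum_bary[OF assms(2)] by (simp add: sum.distrib flip: sum_distrib_left)
  show "(\<lambda>i. (1 - t) * p i + t * q i) = (\<lambda>i. \<Sum>v\<in>W. ((1 - t) * bary p v + t * bary q v) * v i)"
  proof -
    have "p i = (\<Sum>v\<in>W. bary p v * v i)" "q i = (\<Sum>v\<in>W. bary q v * v i)" for i
      using bary_repr[OF assms(1)] bary_repr[OF assms(2)] by meson+
    then show ?thesis by (simp only: sum_lincomb_mult)
  qed
qed

lemma bary_expansion:
  assumes y: "y \<in> Rn d" and z: "z \<in> Rn d" and w: "w \<in> W"
  shows "bary z w = bary y w + (\<Sum>k<d. (z k - y k) * (bary (\<lambda>i. y i + unit_vec k i) w - bary y w))"
proof -
  let ?yk = "\<lambda>k i. y i + unit_vec k i"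
  have yk_Rn: "?yk k \<in> Rn d" if "k < d" for k using y that by (auto simp: Rn_def unit_vec_def)
  let ?c = "\<lambda>v. bary y v + (\<Sum>k<d. (z k - y k) * (bary (?yk k) v - bary y v))"
  show ?thesis
  proof (rule bary_unique[of ?c, OF _ _ w])
    have "(\<Sum>v\<in>W. ?c v) = (\<Sum>v\<in>W. bary y v)
        + (\<Sum>k<d. (z k - y k) * ((\<Sum>v\<in>W. bary (?yk k) v) - (\<Sum>v\<in>W. bary y v)))"
      by (simp add: sum.distrib right_diff_distrib sum_distrib_left sum_subtractf sum.swap[of _ W])
    also have "\<dots> = 1" using sum_bary[OF y] sum_bary[OF yk_Rn] by simp
    finally show "(\<Sum>v\<in>W. ?c v) = 1" .
    show "z = (\<lambda>i. \<Sum>v\<in>W. ?c v * v i)"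
    proof
      fix i
      have y_i: "y j = (\<Sum>v\<in>W. bary y v * v j)" for j using bary_repr[OF y] by meson
      have yk_i: "?yk k j = (\<Sum>v\<in>W. bary (?yk k) v * v j)" if "k < d" for k j
        using bary_repr[OF yk_Rn[OF that]] by meson
      have "(\<Sum>v\<in>W. ?c v * v i) = (\<Sum>v\<in>W. bary y v * v i)
          + (\<Sum>k<d. (z k - y k) * ((\<Sum>v\<in>W. bary (?yk k) v * v i) - (\<Sum>v\<in>W. bary y v * v i)))"
        by (simp add: algebra_simps sum.distrib sum_distrib_left sum_subtractf sum.swap[of _ W])
      also have "\<dots> = y i + (\<Sum>k<d. (z k - y k) * (?yk k i - y i))"
        by (auto simp: y_i[symmetric] yk_i[symmetric] intro!: sum.cong)
      also have "\<dots> = y i + (\<Sum>k<d. (if i = k then z k - y k else 0))"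
        by (simp add: unit_vec_def if_distrib[where f="\<lambda>x. _ * x"] cong: if_cong)
      also have "\<dots> = z i" using y z by (auto simp: Rn_def sum.delta)
      finally show "z i = (\<Sum>v\<in>W. ?c v * v i)" by simp
    qed
  qed
qed

lemma positive_bary_imp_interior:
  assumes y: "y \<in> Rn d" and pos: "\<forall>w\<in>W. 0 < bary y w"
  shows "y \<in> interior_d d (conv W)"
proof -
  let ?g = "\<lambda>k w. bary (\<lambda>i. y i + unit_vec k i) w - bary y w"
  define G where "G = 1 + (\<Sum>w\<in>W. \<Sum>k<d. \<bar>?g k w\<bar>)"
  define \<delta> where "\<delta> = Min (bary y ` W)"
  have "W \<noteq> {}" using card_W by auto
  then have \<delta>_pos: "0 < \<delta>" unfolding \<delta>_def using finite_W pos by simp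
  have \<delta>_le: "\<delta> \<le> bary y w" if "w \<in> W" for w unfolding \<delta>_def using finite_W that by simp
  have G_ge: "1 \<le> G" unfolding G_def by (simp add: sum_nonneg)
  define \<epsilon> where "\<epsilon> = \<delta> / G"
  have \<epsilon>_pos: "0 < \<epsilon>" unfolding \<epsilon>_def using \<delta>_pos G_ge by simp
  have "y \<in> conv W" using mem_conv_iff y pos by (simp add: less_imp_le)
  then show ?thesis unfolding interior_d_def
  proof (intro CollectI conjI exI[of _ \<epsilon>] \<epsilon>_pos ballI impI)
    fix z assume z: "z \<in> Rn d" and dist: "(\<Sum>i<d. (z i - y i)^2) < \<epsilon>^2"
    have coord_close: "\<bar>z k - y k\<bar> \<le> \<epsilon>" if k: "k < d" for k
    proof -
      have "\<bar>z k - y k\<bar>^2 \<le> (\<Sum>i<d. (z i - y i)^2)"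
        using k by (simp, intro member_le_sum) auto
      then show ?thesis using dist \<epsilon>_pos by (meson less_imp_le power_less_imp_less_base le_less_trans)
    qed
    have "0 \<le> bary z w" if w: "w \<in> W" for w
    proof -
      have "\<bar>\<Sum>k<d. (z k - y k) * ?g k w\<bar> \<le> (\<Sum>k<d. \<epsilon> * \<bar>?g k w\<bar>)"
        using coord_close by (intro order.trans[OF sum_abs] sum_mono) (auto simp: abs_mult intro: mult_right_mono)
      also have "\<dots> \<le> \<epsilon> * (G - 1)"
      proof -
        have "(\<Sum>k<d. \<bar>?g k w\<bar>) \<le> (\<Sum>w\<in>W. \<Sum>k<d. \<bar>?g k w\<bar>)"
          using w finite_W by (intro member_le_sum) (auto intro: sum_nonneg)
        then show ?thesis using \<epsilon>_pos unfolding G_def by (simp add: sum_distrib_left[symmetric])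
      qed
      also have "\<dots> < \<delta>" unfolding \<epsilon>_def using G_ge \<delta>_pos by (simp add: field_simps)
      finally show ?thesis unfolding bary_expansion[OF y z w] using \<delta>_le[OF w] by linarith
    qed
    then show "z \<in> conv W" using mem_conv_iff z by simp
  qed
qed

lemma mem_conv_facet:
  assumes y: "y \<in> conv W" and w: "w \<in> W" and zero: "bary y w = 0"
  shows "y \<in> conv (W - {w})"
proof -
  have y_Rn: "y \<in> Rn d" and nonneg: "\<forall>v\<in>W. 0 \<le> bary y v" using mem_conv_iff y by auto
  have "sum (bary y) (W - {w}) = 1" using sum_bary[OF y_Rn] zero finite_W w by (simp add: sum_diff1)
  moreover have "y = (\<lambda>i. \<Sum>v\<in>W - {w}. bary y v * v i)"
    using bary_repr[OF y_Rn] zero finite_W w by (simp add: sum_diff1)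
  ultimately show ?thesis unfolding conv_def using nonneg by blast
qed

lemma open_segment_in_interior:
  assumes p: "p \<in> conv W" and q: "q \<in> conv W" and t: "0 < t" "t < 1"
    and no_common_facet: "\<And>w. w \<in> W \<Longrightarrow> p \<in> conv (W - {w}) \<Longrightarrow> q \<in> conv (W - {w}) \<Longrightarrow> False"
  shows "(\<lambda>i. (1 - t) * p i + t * q i) \<in> interior_d d (conv W)"
proof (rule positive_bary_imp_interior)
  have p_Rn: "p \<in> Rn d" and q_Rn: "q \<in> Rn d" using p q mem_conv_iff by auto
  then show "(\<lambda>i. (1 - t) * p i + t * q i) \<in> Rn d" by (auto simp: Rn_def)
  show "\<forall>w\<in>W. 0 < bary (\<lambda>i. (1 - t) * p i + t * q i) w"
  proof
    fix w assume w: "w \<in> W"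
    show "0 < bary (\<lambda>i. (1 - t) * p i + t * q i) w"
    proof (rule ccontr)
      assume "\<not> 0 < bary (\<lambda>i. (1 - t) * p i + t * q i) w"
      then have "(1 - t) * bary p w + t * bary q w \<le> 0"
        unfolding bary_convex_comb[OF p_Rn q_Rn w] by simp
      moreover have "0 \<le> bary p w" "0 \<le> bary q w" using p q w mem_conv_iff by auto
      ultimately have "bary p w = 0" "bary q w = 0"
        using convex_comb_nonpos_imp_zero[OF _ _ t] by blast+
      then show False using no_common_facet[OF w] mem_conv_facet[OF p w] mem_conv_facet[OF q w] by blast
    qed
  qed
qed

lemma vertex_mem_vertices:
  assumes w: "w \<in> W"
  shows "w \<in> vertices (conv W)"
proof -
  have w_conv: "w \<in> conv W" using mem_conv[OF finite_W w] .
  have w_Rn: "w \<in> Rn d" using W_Rn w by blast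
  have bary_w: "bary w v = (if v = w then 1 else 0)" if "v \<in> W" for v
  proof (rule bary_unique[OF _ _ that])
    show "(\<Sum>v\<in>W. if v = w then 1 else 0) = (1::real)" using finite_W w by simp
    show "w = (\<lambda>i. \<Sum>v\<in>W. (if v = w then 1 else 0) * v i)"
      using finite_W w by (simp add: if_distrib[where f="\<lambda>x. x * _"] cong: if_cong)
  qed
  have eq_w: "a = w" if a: "a \<in> conv W" and zero: "\<forall>v\<in>W - {w}. bary a v = 0" for a
  proof
    fix i
    have a_Rn: "a \<in> Rn d" using a mem_conv_iff by blast
    have "bary a w = 1"
      using sum_bary[OF a_Rn] sum.remove[OF finite_W w, of "bary a"] sum.neutral[OF zero] by simp
    then have same: "bary a v = bary w v" if "v \<in> W" for v
      using zero that bary_w by auto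
    have "a i = (\<Sum>v\<in>W. bary a v * v i)" using bary_repr[OF a_Rn] by meson
    also have "\<dots> = (\<Sum>v\<in>W. bary w v * v i)" using same by simp
    also have "\<dots> = w i" using bary_repr[OF w_Rn] by metis
    finally show "a i = w i" .
  qed
  have False if a: "a \<in> conv W" and b: "b \<in> conv W" and ab: "a \<noteq> b" and t: "0 < t" "t < 1"
    and w_eq: "w = (\<lambda>i. (1 - t) * a i + t * b i)" for a b t
  proof -
    have a_Rn: "a \<in> Rn d" and b_Rn: "b \<in> Rn d" using a b mem_conv_iff by auto
    have "bary a v = 0 \<and> bary b v = 0" if v: "v \<in> W - {w}" for v
    proof -
      have "(1 - t) * bary a v + t * bary b v = 0"
        using bary_convex_comb[OF a_Rn b_Rn, of v t] bary_w v w_eq by auto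
      moreover have "0 \<le> bary a v" "0 \<le> bary b v" using a b v mem_conv_iff by auto
      ultimately show ?thesis using convex_comb_nonpos_imp_zero[OF _ _ t] by auto
    qed
    then show False using eq_w[OF a] eq_w[OF b] ab by auto
  qed
  then show ?thesis unfolding vertices_def using w_conv by blast
qed

lemma not_mem_conv_near:
  assumes x: "x \<in> Rn d" "x \<notin> conv W" and q: "q \<in> Rn d"
  obtains \<delta> where "0 < \<delta>" "\<And>s. 0 \<le> s \<Longrightarrow> s < \<delta> \<Longrightarrow> (\<lambda>i. (1 - s) * x i + s * q i) \<notin> conv W"
proof -
  obtain w where w: "w \<in> W" "bary x w < 0" using x mem_conv_iff by force
  define D where "D = \<bar>bary q w - bary x w\<bar> + 1"
  have D_pos: "0 < D" unfolding D_def by simp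
  show thesis
  proof
    show "0 < - bary x w / D" using w D_pos by (simp add: divide_neg_pos)
    fix s assume s: "0 \<le> s" "s < - bary x w / D"
    have "bary (\<lambda>i. (1 - s) * x i + s * q i) w = bary x w + s * (bary q w - bary x w)"
      using bary_convex_comb[OF x(1) q w(1)] by (simp add: algebra_simps)
    also have "\<dots> \<le> bary x w + s * D"
      unfolding D_def using s(1) by (intro add_left_mono mult_left_mono) auto
    also have "\<dots> < 0" using s D_pos by (simp add: field_simps)
    finally show "(\<lambda>i. (1 - s) * x i + s * q i) \<notin> conv W" using mem_conv_iff w(1) by force
  qed
qed

end

section \<open>General position\<close>

lemma projn_comb: "projn k j (\<lambda>i. \<Sum>v\<in>U. c v * v i) = (\<lambda>i. \<Sum>v\<in>U. c v * projn k j v i)"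
  by (auto simp: projn_def fun_eq_iff)

lemma projn_conv_degenerate:
  assumes U: "finite U" and a: "a \<in> conv U" and b: "b \<in> conv U" and ab: "a \<noteq> b"
    and same_proj: "projn d 1 a = projn d 1 b"
  obtains u where "u \<in> U" "projn d 1 ` conv U \<subseteq> aff_hull (projn d 1 ` (U - {u}))"
proof -
  obtain \<alpha> where \<alpha>: "sum \<alpha> U = 1" "a = (\<lambda>i. \<Sum>v\<in>U. \<alpha> v * v i)"
    using a unfolding conv_def by blast
  obtain \<beta> where \<beta>: "sum \<beta> U = 1" "b = (\<lambda>i. \<Sum>v\<in>U. \<beta> v * v i)"
    using b unfolding conv_def by blast
  define \<mu> where "\<mu> v = \<alpha> v - \<beta> v" for v
  obtain u where u: "u \<in> U" "\<mu> u \<noteq> 0"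
    using ab unfolding \<alpha>(2) \<beta>(2) \<mu>_def by (metis (no_types, lifting) eq_iff_diff_eq_0 sum.cong)
  have sum_\<mu>: "sum \<mu> U = 0" unfolding \<mu>_def using \<alpha>(1) \<beta>(1) by (simp add: sum_subtractf)
  have comb_\<mu>: "(\<Sum>v\<in>U. \<mu> v * projn d 1 v i) = 0" for i
    using fun_cong[OF same_proj, of i] unfolding \<alpha>(2) \<beta>(2) projn_comb \<mu>_def
    by (simp add: left_diff_distrib sum_subtractf)
  have "projn d 1 z \<in> aff_hull (projn d 1 ` (U - {u}))" if z: "z \<in> conv U" for z
  proof -
    obtain \<gamma> where \<gamma>: "sum \<gamma> U = 1" "z = (\<lambda>i. \<Sum>v\<in>U. \<gamma> v * v i)"
      using z unfolding conv_def by blast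
    define c where "c v = \<gamma> v - \<gamma> u / \<mu> u * \<mu> v" for v
    have c_u: "c u = 0" unfolding c_def using u(2) by simp
    have "sum c U = 1"
      unfolding c_def using \<gamma>(1) sum_\<mu> by (simp add: sum_subtractf times_divide_eq_left flip: sum_distrib_left sum_divide_distrib)
    then have "sum c (U - {u}) = 1" using c_u sum.remove[OF U u(1), of c] by simp
    moreover have "projn d 1 z = (\<lambda>i. \<Sum>v\<in>U - {u}. c v * projn d 1 v i)"
    proof
      fix i
      have "projn d 1 z i = (\<Sum>v\<in>U. c v * projn d 1 v i)"
        using comb_\<mu>[of i] unfolding \<gamma>(2) projn_comb c_def
        by (simp add: left_diff_distrib sum_subtractf mult.assoc flip: sum_distrib_left sum_divide_distrib)
      also have "\<dots> = (\<Sum>v\<in>U - {u}. c v * projn d 1 v i)"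
        using c_u sum.remove[OF U u(1), of "\<lambda>v. c v * projn d 1 v i"] by simp
      finally show "projn d 1 z i = (\<Sum>v\<in>U - {u}. c v * projn d 1 v i)" .
    qed
    ultimately show ?thesis using aff_hull_image[of "U - {u}" c "projn d 1"] U by simp
  qed
  then show thesis using that u(1) by blast
qed

lemma inj_on_projn_if_is_simplex:
  assumes U: "finite U" "card U = d" and simplex: "is_simplex (d - 1) (projn d 1 ` conv U)"
  shows "inj_on (projn d 1) (conv U)"
proof (rule inj_onI, rule ccontr)
  fix a b assume "a \<in> conv U" "b \<in> conv U" "projn d 1 a = projn d 1 b" "a \<noteq> b"
  then obtain u where u: "u \<in> U" and degenerate: "projn d 1 ` conv U \<subseteq> aff_hull (projn d 1 ` (U - {u}))"
    using projn_conv_degenerate U(1) by metis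
  obtain W' where W': "aff_indep W'" "card W' = d - 1 + 1" "projn d 1 ` conv U = conv W'"
    using simplex unfolding is_simplex_def by blast
  have "W' \<subseteq> aff_hull (projn d 1 ` (U - {u}))"
    using W' degenerate mem_conv aff_indep_def by blast
  then have "card W' \<le> card (projn d 1 ` (U - {u}))"
    using card_le_if_aff_indep_subset_aff_hull W'(1) U(1) by blast
  also have "\<dots> \<le> card (U - {u})" using U(1) card_image_le by blast
  finally show False using W'(2) U u by simp
qed

lemma facet_inj_on_projn:
  assumes d: "d \<ge> 1" and P: "general_position d P" and W: "Rn_simplex d W"
    and vertices_W: "vertices (conv W) \<subseteq> vertices P" and w: "w \<in> W"
  shows "inj_on (projn d 1) (conv (W - {w}))"
proof (rule inj_on_projn_if_is_simplex)
  show "finite (W - {w})" using Rn_simplex.finite_W[OF W] by simp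
  show card_facet: "card (W - {w}) = d" using Rn_simplex.card_W[OF W] Rn_simplex.finite_W[OF W] w by simp
  have "W - {w} \<subseteq> vertices P" using Rn_simplex.vertex_mem_vertices[OF W] vertices_W by blast
  then have "is_simplex (d - 1) (projn d (d - (d - 1)) ` conv (W - {w}))"
    using P card_facet d unfolding general_position_def by (metis le_refl le_add_diff_inverse2)
  then show "is_simplex (d - 1) (projn d 1 ` conv (W - {w}))" using d by simp
qed

section \<open>The decomposition of Omega\<close>

definition lower :: "nat \<Rightarrow> (nat \<Rightarrow> real) \<Rightarrow> real \<Rightarrow> (nat \<Rightarrow> real)" where
  "lower d x t = (\<lambda>i. if i = d - 1 then x i - t else x i)"

lemma lower_convex_comb: "(\<lambda>i. (1 - s) * x i + s * lower d x t i) = lower d x (s * t)"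
  by (auto simp: lower_def fun_eq_iff algebra_simps)

lemma lower_neq: "t \<noteq> 0 \<Longrightarrow> lower d x t \<noteq> x"
  by (auto simp: lower_def fun_eq_iff)

lemma projn_lower: "d \<ge> 1 \<Longrightarrow> projn d 1 (lower d x t) = projn d 1 x"
  by (auto simp: lower_def projn_def fun_eq_iff)

lemma lower_in_Rn: "d \<ge> 1 \<Longrightarrow> x \<in> Rn d \<Longrightarrow> lower d x t \<in> Rn d"
  by (auto simp: lower_def Rn_def)

lemma Omega_iff:
  assumes "d \<ge> 1" "S \<subseteq> Rn d"
  shows "x \<in> Omega d S \<longleftrightarrow> x \<in> S \<and> (\<exists>t>0. lower d x t \<in> S)"
proof
  assume x: "x \<in> Omega d S"
  then have x_S: "x \<in> S" unfolding Omega_def by blast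
  obtain x' where x': "x' \<in> S" "projn d 1 x' = projn d 1 x" "x' (d - 1) < x (d - 1)"
    using x unfolding Omega_def NB_def by (auto simp: not_le)
  have "x' = lower d x (x (d - 1) - x' (d - 1))"
  proof
    fix i
    have "x' \<in> Rn d" "x \<in> Rn d" using x'(1) x_S assms(2) by auto
    then have "x' i = x i" if "i \<noteq> d - 1"
      using fun_cong[OF x'(2), of i] that unfolding projn_def Rn_def
      by (cases "i < d - 1") auto
    then show "x' i = lower d x (x (d - 1) - x' (d - 1)) i" by (simp add: lower_def)
  qed
  then show "x \<in> S \<and> (\<exists>t>0. lower d x t \<in> S)"
    using x_S x' by (intro conjI exI[of _ "x (d - 1) - x' (d - 1)"]) auto
next
  assume "x \<in> S \<and> (\<exists>t>0. lower d x t \<in> S)"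
  then show "x \<in> Omega d S"
    unfolding Omega_def NB_def using projn_lower[OF assms(1)]
    by (force simp: lower_def dest!: bspec[where x="lower d x _"])
qed

lemma Omega_mono: "S \<subseteq> T \<Longrightarrow> Omega d S \<subseteq> Omega d T"
  unfolding Omega_def NB_def by blast

lemma initial_segment_in_some_simplex:
  assumes I: "finite I" and simplices: "\<And>i. i \<in> I \<Longrightarrow> Rn_simplex d (W i)"
    and x: "x \<in> Rn d" and q: "q \<in> Rn d"
    and cover: "\<And>s. 0 \<le> s \<Longrightarrow> s \<le> 1 \<Longrightarrow> (\<lambda>k. (1 - s) * x k + s * q k) \<in> (\<Union>i\<in>I. conv (W i))"
  obtains i s where "i \<in> I" "0 < s" "x \<in> conv (W i)" "(\<lambda>k. (1 - s) * x k + s * q k) \<in> conv (W i)"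
proof -
  let ?seg = "\<lambda>s. (\<lambda>k. (1 - s) * x k + s * q k)"
  have "\<exists>\<delta>>0. x \<notin> conv (W i) \<longrightarrow> (\<forall>s. 0 \<le> s \<longrightarrow> s < \<delta> \<longrightarrow> ?seg s \<notin> conv (W i))"
    if "i \<in> I" for i
    using Rn_simplex.not_mem_conv_near[OF simplices[OF that] x _ q] zero_less_one by metis
  then obtain \<delta> where \<delta>: "\<And>i. i \<in> I \<Longrightarrow> 0 < \<delta> i"
    "\<And>i s. i \<in> I \<Longrightarrow> x \<notin> conv (W i) \<Longrightarrow> 0 \<le> s \<Longrightarrow> s < \<delta> i \<Longrightarrow> ?seg s \<notin> conv (W i)"
    by metis
  define s where "s = Min (insert 1 (\<delta> ` I)) / 2"
  have s_pos: "0 < s" unfolding s_def using I \<delta>(1) by simp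
  have "Min (insert 1 (\<delta> ` I)) \<le> 1" using I by (simp add: min_le_iff_disj)
  then have s_le: "s \<le> 1" unfolding s_def by simp
  have s_less: "s < \<delta> i" if "i \<in> I" for i
  proof -
    have "Min (insert 1 (\<delta> ` I)) \<le> \<delta> i" using I that by simp
    then show ?thesis unfolding s_def using \<delta>(1)[OF that] by simp
  qed
  obtain i where i: "i \<in> I" "?seg s \<in> conv (W i)" using cover[OF _ s_le] s_pos by auto
  then have "x \<in> conv (W i)" using \<delta>(2)[OF i(1) _ _ s_less[OF i(1)]] s_pos by auto
  then show thesis using that i s_pos by blast
qed

lemma Omega_subset_Union_Omega:
  assumes d: "d \<ge> 1" and I: "finite I" and simplices: "\<And>i. i \<in> I \<Longrightarrow> Rn_simplex d (W i)"
    and V: "V \<subseteq> Rn d" and triang: "conv V = (\<Union>i\<in>I. conv (W i))"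
  shows "Omega d (conv V) \<subseteq> (\<Union>i\<in>I. Omega d (conv (W i)))"
proof
  fix x assume "x \<in> Omega d (conv V)"
  then obtain t where x: "x \<in> conv V" and t: "0 < t" "lower d x t \<in> conv V"
    using Omega_iff[OF d conv_subset_Rn[OF V]] by blast
  have x_Rn: "x \<in> Rn d" using x conv_subset_Rn[OF V] by blast
  obtain i s where i: "i \<in> I" "0 < s" "x \<in> conv (W i)"
    and seg: "(\<lambda>k. (1 - s) * x k + s * lower d x t k) \<in> conv (W i)"
  proof (rule initial_segment_in_some_simplex[OF I simplices x_Rn lower_in_Rn[OF d x_Rn]])
    show "(\<lambda>k. (1 - s) * x k + s * lower d x t k) \<in> (\<Union>i\<in>I. conv (W i))" if "0 \<le> s" "s \<le> 1" for s
      using conv_convex[OF x t(2) that] triang by simp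
  qed auto
  have "lower d x (s * t) \<in> conv (W i)" "0 < s * t" using seg i(2) t(1) unfolding lower_convex_comb by auto
  then have "x \<in> Omega d (conv (W i))"
    using Omega_iff[OF d Rn_simplex.conv_subset_Rn_W[OF simplices[OF i(1)]]] i(3) by blast
  then show "x \<in> (\<Union>i\<in>I. Omega d (conv (W i)))" using i(1) by blast
qed

lemma lower_mem_conv_shrink:
  assumes "x \<in> conv V" "lower d x t \<in> conv V" "0 < s" "s \<le> t"
  shows "lower d x s \<in> conv V"
  using conv_convex[OF assms(1,2), of "s / t"] assms(3,4) unfolding lower_convex_comb by simp

lemma Omega_disjoint:
  assumes d: "d \<ge> 1" and W1: "Rn_simplex d W1" and W2: "Rn_simplex d W2"
    and facets_inj: "\<And>w. w \<in> W1 \<Longrightarrow> inj_on (projn d 1) (conv (W1 - {w}))"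
    and overlap: "conv W1 \<inter> conv W2 \<subseteq> boundary_d d (conv W1)"
  shows "Omega d (conv W1) \<inter> Omega d (conv W2) = {}"
proof (rule ccontr)
  assume "Omega d (conv W1) \<inter> Omega d (conv W2) \<noteq> {}"
  then obtain x t1 t2 where x: "x \<in> conv W1" "x \<in> conv W2" and t: "0 < t1" "0 < t2"
    and lower: "lower d x t1 \<in> conv W1" "lower d x t2 \<in> conv W2"
    using Omega_iff[OF d Rn_simplex.conv_subset_Rn_W[OF W1]]
      Omega_iff[OF d Rn_simplex.conv_subset_Rn_W[OF W2]] by blast
  define s where "s = min t1 t2"
  have s_pos: "0 < s" using t unfolding s_def by simp
  have lower_s: "lower d x s \<in> conv W1" "lower d x s \<in> conv W2"
    using lower_mem_conv_shrink[OF x(1) lower(1) s_pos] lower_mem_conv_shrink[OF x(2) lower(2) s_pos]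
    unfolding s_def by auto
  have "lower d x (1/2 * s) \<in> interior_d d (conv W1)"
    \<comment> \<open>no facet of conv W1 contains the vertical segment from x to lower d x s\<close>
  proof (subst lower_convex_comb[symmetric], rule Rn_simplex.open_segment_in_interior[OF W1 x(1) lower_s(1)])
    fix w assume "w \<in> W1" "x \<in> conv (W1 - {w})" "lower d x s \<in> conv (W1 - {w})"
    then show False
      using facets_inj projn_lower[OF d] lower_neq s_pos by (metis inj_onD less_irrefl)
  qed auto
  moreover have "lower d x (1/2 * s) \<in> conv W1 \<inter> conv W2"
    using lower_mem_conv_shrink[OF x(1) lower_s(1)] lower_mem_conv_shrink[OF x(2) lower_s(2)] s_pos
    by simp
  ultimately show False using overlap unfolding boundary_d_def by blast
qed

section \<open>Lattice points\<close>

lemma abs_coord_conv_le: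
  assumes "finite V" "y \<in> conv V"
  shows "\<bar>y k\<bar> \<le> (\<Sum>v\<in>V. \<bar>v k\<bar>)"
proof -
  obtain c where c: "\<forall>v\<in>V. 0 \<le> c v" "sum c V = 1" "y = (\<lambda>i. \<Sum>v\<in>V. c v * v i)"
    using assms(2) unfolding conv_def by blast
  have c_le: "c v \<le> 1" if "v \<in> V" for v
    using member_le_sum[of v V c] c(1,2) assms(1) that by simp
  have "\<bar>y k\<bar> \<le> (\<Sum>v\<in>V. \<bar>c v * v k\<bar>)" unfolding c(3) by (rule sum_abs)
  also have "\<dots> \<le> (\<Sum>v\<in>V. \<bar>v k\<bar>)"
    using c(1) c_le by (intro sum_mono) (simp add: abs_mult mult_left_le_one_le)
  finally show ?thesis .
qed

lemma finite_lattice_pts_if_bounded: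
  assumes S: "S \<subseteq> Rn d" and bounded: "\<And>y k. y \<in> S \<Longrightarrow> k < d \<Longrightarrow> \<bar>y k\<bar> \<le> B"
  shows "finite (lattice_pts d S)"
proof -
  let ?floors = "\<lambda>y. restrict (\<lambda>i. \<lfloor>y i\<rfloor>) {..<d}"
  have "inj_on ?floors (lattice_pts d S)"
  proof
    fix y y' assume y: "y \<in> lattice_pts d S" and y': "y' \<in> lattice_pts d S" and eq: "?floors y = ?floors y'"
    show "y = y'"
    proof
      fix i
      show "y i = y' i"
      proof (cases "i < d")
        case True
        then have "\<lfloor>y i\<rfloor> = \<lfloor>y' i\<rfloor>" using fun_cong[OF eq, of i] by simp
        moreover have "y i \<in> \<int>" "y' i \<in> \<int>" using y y' True unfolding lattice_pts_def by auto
        ultimately show ?thesis by (metis Ints_cases floor_of_int)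
      next
        case False
        have "y \<in> Rn d" "y' \<in> Rn d" using y y' S unfolding lattice_pts_def by auto
        then show ?thesis using False unfolding Rn_def by simp
      qed
    qed
  qed
  moreover have "?floors ` lattice_pts d S \<subseteq> PiE {..<d} (\<lambda>_. {-\<lceil>B\<rceil>..\<lceil>B\<rceil>})"
  proof -
    have "\<lfloor>y k\<rfloor> \<in> {-\<lceil>B\<rceil>..\<lceil>B\<rceil>}" if "y \<in> S" "k < d" for y k
      using bounded[OF that] by (auto simp: abs_le_iff) (linarith+)
    then show ?thesis unfolding image_subset_iff restrict_PiE lattice_pts_def by auto
  qed
  then have "finite (?floors ` lattice_pts d S)" by (rule finite_subset) (simp add: finite_PiE)
  ultimately show ?thesis using finite_imageD by blast
qed

lemma finite_lattice_pts_conv: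
  assumes "finite V" "V \<subseteq> Rn d"
  shows "finite (lattice_pts d (conv V))"
proof (rule finite_lattice_pts_if_bounded[OF conv_subset_Rn[OF assms(2)]])
  fix y k assume "y \<in> conv V" "k < d"
  then show "\<bar>y k\<bar> \<le> (\<Sum>j<d. \<Sum>v\<in>V. \<bar>v j\<bar>)"
    using abs_coord_conv_le[OF assms(1)] member_le_sum[of k "{..<d}" "\<lambda>j. \<Sum>v\<in>V. \<bar>v j\<bar>"]
    by (force intro: order.trans sum_nonneg)
qed

theorem mainTheorem5:
  fixes d m :: nat and P :: "(nat \<Rightarrow> real) set" and Ps :: "nat \<Rightarrow> (nat \<Rightarrow> real) set"
  assumes "d \<ge> 1"
    and "is_polytope d P"
    and "general_position d P"
    and "P = (\<Union>i\<in>{1..m}. Ps i)"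
    and "\<And>i. i \<in> {1..m} \<Longrightarrow> is_simplex d (Ps i) \<and> vertices (Ps i) \<subseteq> vertices P"
    and "\<And>i j. i \<in> {1..m} \<Longrightarrow> j \<in> {1..m} \<Longrightarrow> i \<noteq> j \<Longrightarrow>
           Ps i \<inter> Ps j \<subseteq> boundary_d d (Ps i) \<inter> boundary_d d (Ps j)"
  shows "(\<forall>x\<in>Rn d. indicator (Omega d P) x = (\<Sum>i\<in>{1..m}. indicator (Omega d (Ps i)) x :: real))
         \<and> card (lattice_pts d (Omega d P)) = (\<Sum>i\<in>{1..m}. card (lattice_pts d (Omega d (Ps i))))"
proof -
  obtain V where V: "finite V" "V \<subseteq> Rn d" "P = conv V"
    using assms(2) unfolding is_polytope_def by blast
  obtain W where W: "\<And>i. i \<in> {1..m} \<Longrightarrow> Rn_simplex d (W i) \<and> Ps i = conv (W i)"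
    using assms(5) unfolding is_simplex_def Rn_simplex_def by metis
  have "Omega d P \<subseteq> (\<Union>i\<in>{1..m}. Omega d (Ps i))"
    using Omega_subset_Union_Omega[OF assms(1) _ _ V(2), of "{1..m}" W] V(3) W assms(4) by simp
  moreover have "Omega d (Ps i) \<subseteq> Omega d P" if "i \<in> {1..m}" for i
    using Omega_mono assms(4) that by blast
  ultimately have Omega_P: "Omega d P = (\<Union>i\<in>{1..m}. Omega d (Ps i))" by blast
  have disjoint: "disjoint_family_on (\<lambda>i. Omega d (Ps i)) {1..m}"
    unfolding disjoint_family_on_def
    using Omega_disjoint[OF assms(1)] facet_inj_on_projn[OF assms(1,3)] W assms(5,6) by (metis le_infE)
  have lattice_Omega_P: "lattice_pts d (Omega d P) = (\<Union>i\<in>{1..m}. lattice_pts d (Omega d (Ps i)))"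
    unfolding Omega_P lattice_pts_def by blast
  have "finite (lattice_pts d (Omega d P))"
    using finite_lattice_pts_conv[OF V(1,2)] V(3) unfolding lattice_pts_def Omega_def
    by (auto elim!: finite_subset[rotated])
  then have "card (lattice_pts d (Omega d P)) = (\<Sum>i\<in>{1..m}. card (lattice_pts d (Omega d (Ps i))))"
    unfolding lattice_Omega_P using disjoint
    by (intro card_UN_disjoint) (auto simp: disjoint_family_on_def lattice_pts_def)
  moreover have "indicator (Omega d P) x = (\<Sum>i\<in>{1..m}. indicator (Omega d (Ps i)) x :: real)" for x
    unfolding Omega_P by (rule indicator_UN_disjoint[OF _ disjoint]) simp
  ultimately show ?thesis by blast
qed

end
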